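(* Let $G$ be a locally compact group, $H$ a compact subgroup of $G$, and $X$ a proper $G$-space. (a) If $S$ is a global $H$-slice of $X$ which is a small subset of $X$, then the slicing map $f_S:X\to G/H$ is continuous and open. If in addition $S$ is compact, then $f_S$ is also closed. (b) Conversely, if $f:X\to G/H$ is a continuous equivariant map, then $S=f^{-1}(eH)$ is a global $H$-slice of $X$ which is a small subset of $X$, and $f_S=f$.
   Context: All spaces are completely regular Hausdorff. A $G$-space is a space $X$ with a continuous action $G\times X\to X$, $(g,x)\mapsto gx$, with $ex=x$ and $(gh)x=g(hx)$. A map $f:X\to Y$ between $G$-spaces is equivariant if $f(gx)=gf(x)$. $G/H$ denotes the space of left cosets $xH$ with the quotient topology and action $g(xH)=(gx)H$; $e$ is the unit of $G$. For $S\subset X$, $G(S)=\{gs\mid g\in G,s\in S\}$. For a closed subgroup $H\subset G$, a subset $S\subset X$ is an $H$-slice in $X$ if: (i) $H(S)=S$; (ii) $S$ is closed in $G(S)$; (iii) if $g\in G\setminus H$ then $gS\cap S=\emptyset$; (iv) $G(S)$ is open in $X$. It is a global $H$-slice if moreover $G(S)=X$. For an $H$-slice $S$, the slicing map $f_S:G(S)\to G/H$ is defined by $f_S(gs)=gH$ for $g\in G$, $s\in S$ (well defined by (iii)). For $U,V\subset X$ the transporter is $\langle U,V\rangle=\{g\in G\mid gU\cap V\neq\emptyset\}$; $U$ and $V$ are thin relative to each other if $\langle U,V\rangle$ has compact closure in $G$. A subset $U\subset X$ is small if every point of $X$ has a neighborhood thin relative to $U$. For $G$ locally compact, a $G$-space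 $X$ is proper if every point of $X$ has a small neighborhood. *)

theory Defs
  imports "HOL-Analysis.Analysis" "HOL-Algebra.Left_Coset"
begin

definition topological_group :: "('g, 'b) monoid_scheme \<Rightarrow> 'g topology \<Rightarrow> bool" where
  "topological_group G TG \<longleftrightarrow>
     group G \<and> topspace TG = carrier G \<and>
     continuous_map (prod_topology TG TG) TG (\<lambda>(x, y). x \<otimes>\<^bsub>G\<^esub> y) \<and>
     continuous_map TG TG (\<lambda>x. inv\<^bsub>G\<^esub> x)"

definition G_space :: "('g, 'b) monoid_scheme \<Rightarrow> 'g topology \<Rightarrow> 'x topology \<Rightarrow> ('g \<Rightarrow> 'x \<Rightarrow> 'x) \<Rightarrow> bool" where
  "G_space G TG TX act \<longleftrightarrow>
     continuous_map (prod_topology TG TX) TX (\<lambda>(g, x). act g x) \<and>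
     (\<forall>x\<in>topspace TX. act \<one>\<^bsub>G\<^esub> x = x) \<and>
     (\<forall>g\<in>carrier G. \<forall>h\<in>carrier G. \<forall>x\<in>topspace TX. act (g \<otimes>\<^bsub>G\<^esub> h) x = act g (act h x))"

definition coset_topology :: "('g, 'b) monoid_scheme \<Rightarrow> 'g topology \<Rightarrow> 'g set \<Rightarrow> 'g set topology" where
  "coset_topology G TG H =
     topology (\<lambda>U. U \<subseteq> lcosets\<^bsub>G\<^esub> H \<and> openin TG {x \<in> carrier G. x <#\<^bsub>G\<^esub> H \<in> U})"

lemma istopology_coset_topology:
  "istopology (\<lambda>U. U \<subseteq> lcosets\<^bsub>G\<^esub> H \<and> openin TG {x \<in> carrier G. x <#\<^bsub>G\<^esub> H \<in> U})"
proof -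
  have int: "{x \<in> carrier G. x <#\<^bsub>G\<^esub> H \<in> S \<inter> T} =
        {x \<in> carrier G. x <#\<^bsub>G\<^esub> H \<in> S} \<inter> {x \<in> carrier G. x <#\<^bsub>G\<^esub> H \<in> T}" for S T
    by auto
  have un: "{x \<in> carrier G. x <#\<^bsub>G\<^esub> H \<in> \<Union>K} =
        \<Union>((\<lambda>U. {x \<in> carrier G. x <#\<^bsub>G\<^esub> H \<in> U}) ` K)" for K
    by auto
  show ?thesis
    unfolding istopology_def
    by (auto simp only: int un intro!: openin_Int openin_Union)
qed

abbreviation coset_act :: "('g, 'b) monoid_scheme \<Rightarrow> 'g \<Rightarrow> 'g set \<Rightarrow> 'g set" where
  "coset_act G g C \<equiv> g <#\<^bsub>G\<^esub> C"

definition orbit_set :: "('g, 'b) monoid_scheme \<Rightarrow> ('g \<Rightarrow> 'x \<Rightarrow> 'x) \<Rightarrow> 'x set \<Rightarrow> 'x set" where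
  "orbit_set G act S = {act g s | g s. g \<in> carrier G \<and> s \<in> S}"

definition is_slice :: "('g, 'b) monoid_scheme \<Rightarrow> 'x topology \<Rightarrow> ('g \<Rightarrow> 'x \<Rightarrow> 'x) \<Rightarrow> 'g set \<Rightarrow> 'x set \<Rightarrow> bool" where
  "is_slice G TX act H S \<longleftrightarrow>
     S \<subseteq> topspace TX \<and>
     {act h s | h s. h \<in> H \<and> s \<in> S} = S \<and>
     closedin (subtopology TX (orbit_set G act S)) S \<and>
     (\<forall>g \<in> carrier G - H. (act g ` S) \<inter> S = {}) \<and>
     openin TX (orbit_set G act S)"

definition is_global_slice :: "('g, 'b) monoid_scheme \<Rightarrow> 'x topology \<Rightarrow> ('g \<Rightarrow> 'x \<Rightarrow> 'x) \<Rightarrow> 'g set \<Rightarrow> 'x set \<Rightarrow> bool" where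
  "is_global_slice G TX act H S \<longleftrightarrow> is_slice G TX act H S \<and> orbit_set G act S = topspace TX"

definition slicing_map :: "('g, 'b) monoid_scheme \<Rightarrow> ('g \<Rightarrow> 'x \<Rightarrow> 'x) \<Rightarrow> 'g set \<Rightarrow> 'x set \<Rightarrow> 'x \<Rightarrow> 'g set" where
  "slicing_map G act H S x =
     (SOME C. \<exists>g \<in> carrier G. \<exists>s \<in> S. x = act g s \<and> C = g <#\<^bsub>G\<^esub> H)"

definition transporter :: "('g, 'b) monoid_scheme \<Rightarrow> ('g \<Rightarrow> 'x \<Rightarrow> 'x) \<Rightarrow> 'x set \<Rightarrow> 'x set \<Rightarrow> 'g set" where
  "transporter G act U V = {g \<in> carrier G. (act g ` U) \<inter> V \<noteq> {}}"

definition thin :: "('g, 'b) monoid_scheme \<Rightarrow> 'g topology \<Rightarrow> ('g \<Rightarrow> 'x \<Rightarrow> 'x) \<Rightarrow> 'x set \<Rightarrow> 'x set \<Rightarrow> bool" where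
  "thin G TG act U V \<longleftrightarrow> compactin TG (TG closure_of (transporter G act U V))"

definition neighborhood :: "'x topology \<Rightarrow> 'x \<Rightarrow> 'x set \<Rightarrow> bool" where
  "neighborhood TX x N \<longleftrightarrow> N \<subseteq> topspace TX \<and> (\<exists>W. openin TX W \<and> x \<in> W \<and> W \<subseteq> N)"

definition small :: "('g, 'b) monoid_scheme \<Rightarrow> 'g topology \<Rightarrow> 'x topology \<Rightarrow> ('g \<Rightarrow> 'x \<Rightarrow> 'x) \<Rightarrow> 'x set \<Rightarrow> bool" where
  "small G TG TX act U \<longleftrightarrow>
     (\<forall>x \<in> topspace TX. \<exists>N. neighborhood TX x N \<and> thin G TG act N U)"

definition proper_G_space :: "('g, 'b) monoid_scheme \<Rightarrow> 'g topology \<Rightarrow> 'x topology \<Rightarrow> ('g \<Rightarrow> 'x \<Rightarrow> 'x) \<Rightarrow> bool" where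
  "proper_G_space G TG TX act \<longleftrightarrow>
     G_space G TG TX act \<and> locally_compact_space TG \<and>
     (\<forall>x \<in> topspace TX. \<exists>N. neighborhood TX x N \<and> small G TG TX act N)"

end

theory Submission
  imports Defs
begin

text \<open>For a global slice \<open>S\<close> the cosets in \<open>f\<^sub>S(C)\<close> are the \<open>gH\<close> with \<open>g \<in> \<langle>S, C\<rangle>\<close>, and \<open>G/H\<close>
  carries the quotient topology, so openness of \<open>f\<^sub>S\<close> reduces to the transporter of \<open>S\<close> into an
  open set being open (a union of preimages under orbit maps), and closedness for compact \<open>S\<close>
  to the transporter of a compact set into a closed set being closed (tube lemma). Continuity
  uses smallness of \<open>S\<close>: near a point only a relatively compact set of group elements moves
  points into \<open>S\<close>, and the tube lemma again controls them.

  Conversely, for an equivariant \<open>f\<close> the fibre \<open>f\<^sup>-\<^sup>1(eH)\<close> is closed because \<open>H\<close> is, the slice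
  axioms follow from equivariance, and the transporter of \<open>f\<^sup>-\<^sup>1(UH)\<close> into the fibre lies in
  \<open>H U\<^sup>-\<^sup>1\<close>, which is relatively compact when \<open>U\<close> is; the quotient map \<open>G \<rightarrow> G/H\<close> being open,
  \<open>f\<^sup>-\<^sup>1(UH)\<close> is a neighbourhood.\<close>

lemma (in group) lcos_eq_iff:
  assumes "subgroup H G" "a \<in> carrier G" "b \<in> carrier G"
  shows "a <# H = b <# H \<longleftrightarrow> inv a \<otimes> b \<in> H"
proof
  assume "a <# H = b <# H"
  then have "b \<in> a <# H" using lcos_self assms by blast
  then show "inv a \<otimes> b \<in> H" using subgroup.lcos_module_imp[OF assms(1) is_group assms(2)] by blast
next
  assume "inv a \<otimes> b \<in> H"
  then have "b \<in> a <# H" using subgroup.lcos_module_rev[OF assms(1) is_group assms(2,3)] by blast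
  then show "a <# H = b <# H" using l_repr_independence assms by blast
qed

lemma openin_coset_topology:
  "openin (coset_topology G TG H) U \<longleftrightarrow>
     U \<subseteq> lcosets\<^bsub>G\<^esub> H \<and> openin TG {x \<in> carrier G. x <#\<^bsub>G\<^esub> H \<in> U}"
  by (simp add: coset_topology_def istopology_coset_topology)

lemma topspace_coset_topology:
  assumes "topspace TG = carrier G"
  shows "topspace (coset_topology G TG H) = lcosets\<^bsub>G\<^esub> H"
proof (rule subset_antisym)
  show "topspace (coset_topology G TG H) \<subseteq> lcosets\<^bsub>G\<^esub> H"
    unfolding topspace_def openin_coset_topology by blast
  have "{x \<in> carrier G. x <#\<^bsub>G\<^esub> H \<in> lcosets\<^bsub>G\<^esub> H} = topspace TG"
    using assms by (auto simp: LCOSETS_def)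
  then have "openin (coset_topology G TG H) (lcosets\<^bsub>G\<^esub> H)"
    unfolding openin_coset_topology by simp
  then show "lcosets\<^bsub>G\<^esub> H \<subseteq> topspace (coset_topology G TG H)"
    by (rule openin_subset)
qed

locale topological_G_space =
  fixes G :: "('g, 'b) monoid_scheme" (structure) and TG :: "'g topology"
    and TX :: "'x topology" and act :: "'g \<Rightarrow> 'x \<Rightarrow> 'x"
  assumes topological_group: "topological_group G TG"
    and G_space: "G_space G TG TX act"

sublocale topological_G_space \<subseteq> group G
  using topological_group by (simp add: topological_group_def)

context topological_G_space
begin

lemma topspace_group [simp]: "topspace TG = carrier G"
  using topological_group by (simp add: topological_group_def)

lemma continuous_map_mult: "continuous_map (prod_topology TG TG) TG (\<lambda>(x, y). x \<otimes> y)"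
  using topological_group by (simp add: topological_group_def)

lemma continuous_map_inv: "continuous_map TG TG (\<lambda>x. inv x)"
  using topological_group by (simp add: topological_group_def)

lemma continuous_map_act: "continuous_map (prod_topology TG TX) TX (\<lambda>(g, x). act g x)"
  using G_space by (simp add: G_space_def)

lemma act_one [simp]: "x \<in> topspace TX \<Longrightarrow> act \<one> x = x"
  using G_space by (simp add: G_space_def)

lemma act_mult:
  "\<lbrakk>g \<in> carrier G; h \<in> carrier G; x \<in> topspace TX\<rbrakk> \<Longrightarrow> act (g \<otimes> h) x = act g (act h x)"
  using G_space by (simp add: G_space_def)

lemma act_closed: "\<lbrakk>g \<in> carrier G; x \<in> topspace TX\<rbrakk> \<Longrightarrow> act g x \<in> topspace TX"
  using funcset_mem[OF continuous_map_funspace[OF continuous_map_act], of "(g, x)"] by simp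

lemma act_inv_act [simp]: "\<lbrakk>g \<in> carrier G; x \<in> topspace TX\<rbrakk> \<Longrightarrow> act (inv g) (act g x) = x"
  using act_mult[of "inv g" g x] by simp

lemma act_act_inv [simp]: "\<lbrakk>g \<in> carrier G; x \<in> topspace TX\<rbrakk> \<Longrightarrow> act g (act (inv g) x) = x"
  using act_mult[of g "inv g" x] by simp

lemma continuous_map_act_at: "x \<in> topspace TX \<Longrightarrow> continuous_map TG TX (\<lambda>g. act g x)"
  using continuous_map_compose[OF _ continuous_map_act, of TG "\<lambda>g. (g, x)"]
  by (simp add: o_def continuous_map_pairedI)

lemma continuous_map_mult_right: "h \<in> carrier G \<Longrightarrow> continuous_map TG TG (\<lambda>g. g \<otimes> h)"
  using continuous_map_compose[OF _ continuous_map_mult, of TG "\<lambda>g. (g, h)"]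
  by (simp add: o_def continuous_map_pairedI)

lemma compactin_mult_inv:
  assumes "compactin TG A" "compactin TG B"
  shows "compactin TG ((\<lambda>(a, b). a \<otimes> inv b) ` (A \<times> B))"
proof -
  have "continuous_map (prod_topology TG TG) TG (\<lambda>(a, b). a \<otimes> inv b)"
    using continuous_map_compose[OF continuous_map_pairedI continuous_map_mult,
        OF continuous_map_fst continuous_map_compose[OF continuous_map_snd continuous_map_inv]]
    by (simp add: o_def case_prod_unfold)
  then show ?thesis
    using image_compactin assms by (metis compactin_Times)
qed

lemma thinI:
  assumes "Hausdorff_space TG" "compactin TG K" "transporter G act U V \<subseteq> K"
  shows "thin G TG act U V"
  unfolding thin_def
  using assms closure_of_minimal[OF assms(3) compactin_imp_closedin[OF assms(1,2)]]
    closed_compactin closedin_closure_of by blast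

lemma openin_transporter:
  assumes "S \<subseteq> topspace TX" "openin TX U"
  shows "openin TG (transporter G act S U)"
proof -
  have "transporter G act S U = (\<Union>s\<in>S. {g \<in> topspace TG. act g s \<in> U})"
    unfolding transporter_def by auto
  moreover have "openin TG {g \<in> topspace TG. act g s \<in> U}" if "s \<in> S" for s
    using openin_continuous_map_preimage[OF continuous_map_act_at assms(2)] assms(1) that by blast
  ultimately show ?thesis by auto
qed

lemma openin_act_outside:
  assumes "closedin TX C"
  shows "openin (prod_topology TG TX) {p \<in> carrier G \<times> topspace TX. act (fst p) (snd p) \<notin> C}"
proof -
  have "{p \<in> carrier G \<times> topspace TX. act (fst p) (snd p) \<notin> C} =
        {p \<in> topspace (prod_topology TG TX). (\<lambda>(g, x). act g x) p \<in> topspace TX - C}"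
    using act_closed by auto
  moreover have "openin TX (topspace TX - C)"
    using assms by (simp add: closedin_def)
  ultimately show ?thesis
    using openin_continuous_map_preimage[OF continuous_map_act] by metis
qed

lemma closedin_transporter:
  assumes "compactin TX S" "closedin TX C"
  shows "closedin TG (transporter G act S C)"
proof -
  let ?P = "{p \<in> carrier G \<times> topspace TX. act (fst p) (snd p) \<notin> C}"
  have "openin TG (carrier G - transporter G act S C)"
  proof (subst openin_subopen, intro ballI)
    fix g0 assume g0: "g0 \<in> carrier G - transporter G act S C"
    then have "{g0} \<times> S \<subseteq> ?P"
      using compactin_subset_topspace[OF assms(1)] by (auto simp: transporter_def)
    then obtain U V where U: "openin TG U" "g0 \<in> U" and UV: "S \<subseteq> V" "U \<times> V \<subseteq> ?P"
      using tube_lemma_right[OF openin_act_outside[OF assms(2)] assms(1), of g0] g0 by auto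
    have "U \<subseteq> carrier G - transporter G act S C"
      using UV openin_subset[OF U(1)] by (fastforce simp: transporter_def)
    then show "\<exists>T. openin TG T \<and> g0 \<in> T \<and> T \<subseteq> carrier G - transporter G act S C"
      using U by blast
  qed
  then show ?thesis
    by (simp add: closedin_def transporter_def)
qed

lemma transporter_disjoint_nbhd:
  assumes "closedin TX C" "compactin TG K" "x \<in> topspace TX"
    and "K \<inter> transporter G act {x} C = {}"
  obtains V where "openin TX V" "x \<in> V" "K \<inter> transporter G act V C = {}"
proof -
  let ?P = "{p \<in> carrier G \<times> topspace TX. act (fst p) (snd p) \<notin> C}"
  have "K \<times> {x} \<subseteq> ?P"
    using compactin_subset_topspace[OF assms(2)] assms(3,4) by (auto simp: transporter_def)
  then obtain U V where "openin TX V" "x \<in> V" "K \<times> V \<subseteq> ?P"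
    using tube_lemma_left[OF openin_act_outside[OF assms(1)] assms(2,3)] by blast
  then show thesis
    by (intro that[of V]) (auto simp: transporter_def)
qed

end

locale G_space_cosets = topological_G_space +
  fixes H :: "'g set"
  assumes subgroup: "subgroup H G"
begin

lemma H_subset: "H \<subseteq> carrier G"
  using subgroup by (rule subgroup.subset)

lemma lcos_in_lcosets: "g \<in> carrier G \<Longrightarrow> g <# H \<in> lcosets H"
  by (auto simp: LCOSETS_def)

lemma lcos_eq_one_iff: "g \<in> carrier G \<Longrightarrow> g <# H = \<one> <# H \<longleftrightarrow> g \<in> H"
  using lcos_eq_iff[OF subgroup, of g \<one>] subgroup.m_inv_closed[OF subgroup] by force

lemma closedin_coset_topology:
  "closedin (coset_topology G TG H) W \<longleftrightarrow>
     W \<subseteq> lcosets H \<and> closedin TG {g \<in> carrier G. g <# H \<in> W}"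
proof -
  have "{g \<in> carrier G. g <# H \<in> lcosets H - W} = carrier G - {g \<in> carrier G. g <# H \<in> W}"
    using lcos_in_lcosets by blast
  then show ?thesis
    by (simp add: closedin_def openin_coset_topology topspace_coset_topology)
qed

lemma closedin_coset_topology_singleton_one:
  assumes "closedin TG H"
  shows "closedin (coset_topology G TG H) {\<one> <# H}"
proof -
  have "{g \<in> carrier G. g <# H \<in> {\<one> <# H}} = H"
    using lcos_eq_one_iff H_subset by auto
  then show ?thesis
    using assms lcos_in_lcosets by (simp add: closedin_coset_topology)
qed

lemma openin_coset_topology_image:
  assumes "openin TG U"
  shows "openin (coset_topology G TG H) ((\<lambda>g. g <# H) ` U)"
proof -
  have U: "U \<subseteq> carrier G" using openin_subset[OF assms] by simp
  have "{g \<in> carrier G. g <# H \<in> (\<lambda>g. g <# H) ` U} = (\<Union>h\<in>H. {g \<in> topspace TG. g \<otimes> h \<in> U})"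
  proof (intro equalityI subsetI)
    fix g assume "g \<in> {g \<in> carrier G. g <# H \<in> (\<lambda>g. g <# H) ` U}"
    then obtain u where "g \<in> carrier G" "u \<in> U" "g <# H = u <# H" by auto
    moreover have "g \<otimes> (inv g \<otimes> u) = u" using calculation U by (auto simp: m_assoc[symmetric])
    ultimately show "g \<in> (\<Union>h\<in>H. {g \<in> topspace TG. g \<otimes> h \<in> U})"
      using lcos_eq_iff[OF subgroup] U by (intro UN_I[of "inv g \<otimes> u"]) auto
  next
    fix g assume "g \<in> (\<Union>h\<in>H. {g \<in> topspace TG. g \<otimes> h \<in> U})"
    then obtain h where h: "h \<in> H" "g \<in> carrier G" "g \<otimes> h \<in> U" by auto
    have "inv g \<otimes> (g \<otimes> h) = h"
      using h H_subset by (auto simp: m_assoc[symmetric])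
    then have "g <# H = (g \<otimes> h) <# H"
      using h H_subset by (subst lcos_eq_iff[OF subgroup]) auto
    with h show "g \<in> {g \<in> carrier G. g <# H \<in> (\<lambda>g. g <# H) ` U}" by auto
  qed
  moreover have "openin TG {g \<in> topspace TG. g \<otimes> h \<in> U}" if "h \<in> H" for h
    using openin_continuous_map_preimage[OF continuous_map_mult_right assms] H_subset that by blast
  ultimately show ?thesis
    using U lcos_in_lcosets by (auto simp: openin_coset_topology)
qed

lemma slicing_map_act:
  assumes "is_slice G TX act H S" "g \<in> carrier G" "s \<in> S"
  shows "slicing_map G act H S (act g s) = g <# H"
proof -
  have S: "S \<subseteq> topspace TX" and sep: "\<forall>g \<in> carrier G - H. act g ` S \<inter> S = {}"
    using assms(1) by (simp_all add: is_slice_def)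
  have "\<exists>C. \<exists>g'\<in>carrier G. \<exists>s'\<in>S. act g s = act g' s' \<and> C = g' <# H"
    using assms by blast
  then have "\<exists>g'\<in>carrier G. \<exists>s'\<in>S. act g s = act g' s' \<and> slicing_map G act H S (act g s) = g' <# H"
    unfolding slicing_map_def by (rule someI_ex)
  then obtain g' s' where g': "g' \<in> carrier G" "s' \<in> S" "act g s = act g' s'"
    and f: "slicing_map G act H S (act g s) = g' <# H"
    by blast
  have "act (inv g \<otimes> g') s' = act (inv g) (act g' s')"
    using g' assms(2) S by (intro act_mult) auto
  also have "\<dots> = s"
    using g'(3) assms(2,3) S by (metis act_inv_act subsetD)
  finally have "act (inv g \<otimes> g') s' = s" .
  then have "inv g \<otimes> g' \<in> H"
    using sep g' assms(2,3) by blast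
  then have "g <# H = g' <# H"
    using assms(2) g' by (subst lcos_eq_iff[OF subgroup]) auto
  with f show ?thesis by simp
qed

lemma slicing_map_eq_inv_lcos:
  assumes "is_slice G TX act H S" "g \<in> carrier G" "x \<in> topspace TX" "act g x \<in> S"
  shows "slicing_map G act H S x = inv g <# H"
  using slicing_map_act[OF assms(1) inv_closed[OF assms(2)] assms(4)] assms(2,3) by simp

lemma global_sliceE:
  assumes "is_global_slice G TX act H S" "x \<in> topspace TX"
  obtains t where "t \<in> carrier G" "act t x \<in> S"
proof -
  obtain g s where "g \<in> carrier G" "s \<in> S" "x = act g s"
    using assms unfolding is_global_slice_def orbit_set_def by blast
  moreover have "S \<subseteq> topspace TX"
    using assms(1) by (simp add: is_global_slice_def is_slice_def)
  ultimately show thesis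
    using that[of "inv g"] by auto
qed

lemma slicing_map_in_lcosets:
  assumes "is_global_slice G TX act H S" "x \<in> topspace TX"
  shows "slicing_map G act H S x \<in> lcosets H"
proof -
  obtain t where "t \<in> carrier G" "act t x \<in> S"
    using assms by (rule global_sliceE)
  then show ?thesis
    using assms slicing_map_eq_inv_lcos lcos_in_lcosets by (simp add: is_global_slice_def)
qed

lemma slicing_map_image_preimage:
  assumes slice: "is_global_slice G TX act H S" and C: "C \<subseteq> topspace TX"
  shows "{g \<in> carrier G. g <# H \<in> slicing_map G act H S ` C} = transporter G act S C"
proof (intro equalityI subsetI)
  have S: "is_slice G TX act H S" using slice by (simp add: is_global_slice_def)
  fix g assume "g \<in> transporter G act S C"
  then obtain s where "g \<in> carrier G" "s \<in> S" "act g s \<in> C"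
    by (auto simp: transporter_def)
  then show "g \<in> {g \<in> carrier G. g <# H \<in> slicing_map G act H S ` C}"
    using slicing_map_act[OF S] by force
next
  have S: "is_slice G TX act H S" using slice by (simp add: is_global_slice_def)
  fix g assume "g \<in> {g \<in> carrier G. g <# H \<in> slicing_map G act H S ` C}"
  then obtain c where g: "g \<in> carrier G" and c: "c \<in> C" "g <# H = slicing_map G act H S c"
    by blast
  have cX: "c \<in> topspace TX" using C c(1) by blast
  then obtain t where t: "t \<in> carrier G" "act t c \<in> S"
    using slice by (blast elim: global_sliceE)
  then have "g <# H = inv t <# H"
    using c slicing_map_eq_inv_lcos[OF S _ cX] by simp
  then have h: "inv g \<otimes> inv t \<in> H"
    using lcos_eq_iff[OF subgroup] g t by blast
  then have "act (inv g \<otimes> inv t) (act t c) \<in> S"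
    using S t(2) unfolding is_slice_def by blast
  moreover have "act g (act (inv g \<otimes> inv t) (act t c)) = act (g \<otimes> ((inv g \<otimes> inv t) \<otimes> t)) c"
    using g t cX by (simp add: act_mult)
  moreover have "g \<otimes> ((inv g \<otimes> inv t) \<otimes> t) = \<one>"
    using g t by (simp add: m_assoc)
  ultimately have "c \<in> act g ` S \<inter> C"
    using c(1) cX by (metis IntI act_one image_eqI)
  then show "g \<in> transporter G act S C"
    using g unfolding transporter_def by blast
qed

lemma open_map_slicing_map:
  assumes "is_global_slice G TX act H S"
  shows "open_map TX (coset_topology G TG H) (slicing_map G act H S)"
  unfolding open_map_def
proof (intro allI impI)
  fix U assume U: "openin TX U"
  have "S \<subseteq> topspace TX"
    using assms by (simp add: is_global_slice_def is_slice_def)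
  then show "openin (coset_topology G TG H) (slicing_map G act H S ` U)"
    using slicing_map_in_lcosets[OF assms] openin_subset[OF U] openin_transporter[OF _ U]
    by (auto simp: openin_coset_topology slicing_map_image_preimage[OF assms openin_subset[OF U]])
qed

lemma closed_map_slicing_map:
  assumes "is_global_slice G TX act H S" "compactin TX S"
  shows "closed_map TX (coset_topology G TG H) (slicing_map G act H S)"
  unfolding closed_map_def
proof (intro allI impI)
  fix C assume C: "closedin TX C"
  then show "closedin (coset_topology G TG H) (slicing_map G act H S ` C)"
    using slicing_map_in_lcosets[OF assms(1)] closedin_subset[OF C] closedin_transporter[OF assms(2) C]
    by (auto simp: closedin_coset_topology slicing_map_image_preimage[OF assms(1) closedin_subset[OF C]])
qed

text \<open>If \<open>t\<close> moves \<open>y\<close> into \<open>S\<close> then \<open>f\<^sub>S y = t\<^sup>-\<^sup>1H\<close>. For \<open>y\<close> near \<open>x\<^sub>0\<close> such \<open>t\<close> lie in the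
  compact closure of \<open>\<langle>N, S\<rangle>\<close>; its elements \<open>t\<close> with \<open>t\<^sup>-\<^sup>1H \<notin> W\<close> form a compact set \<open>K\<close> none of
  whose elements moves \<open>x\<^sub>0\<close> into \<open>S\<close>, hence, by the tube lemma, none moves any point of some
  neighbourhood \<open>V\<close> of \<open>x\<^sub>0\<close> into \<open>S\<close>.\<close>
lemma continuous_map_slicing_map:
  assumes slice: "is_global_slice G TX act H S" and small: "small G TG TX act S"
  shows "continuous_map TX (coset_topology G TG H) (slicing_map G act H S)"
proof -
  let ?f = "slicing_map G act H S"
  have S: "is_slice G TX act H S" "closedin TX S"
    using slice unfolding is_global_slice_def is_slice_def by (metis subtopology_topspace)+
  have "openin TX {x \<in> topspace TX. ?f x \<in> W}" if W: "openin (coset_topology G TG H) W" for W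
  proof (subst openin_subopen, intro ballI)
    fix x0 assume x0: "x0 \<in> {x \<in> topspace TX. ?f x \<in> W}"
    define Q where "Q = {g \<in> carrier G. inv g <# H \<in> W}"
    have Q_eq: "Q = {g \<in> topspace TG. inv g \<in> {g \<in> carrier G. g <# H \<in> W}}"
      by (auto simp: Q_def)
    have "openin TG {g \<in> carrier G. g <# H \<in> W}"
      using W by (simp add: openin_coset_topology)
    then have "openin TG Q"
      unfolding Q_eq by (rule openin_continuous_map_preimage[OF continuous_map_inv])
    obtain N W0 where W0: "openin TX W0" "x0 \<in> W0" "W0 \<subseteq> N" and "thin G TG act N S"
      using small x0 by (force simp: small_def neighborhood_def)
    define K where "K = TG closure_of transporter G act N S \<inter> (carrier G - Q)"
    have "compactin TG K"
      using \<open>thin G TG act N S\<close> \<open>openin TG Q\<close> unfolding K_def thin_def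
      by (metis closedin_diff closedin_topspace compact_Int_closedin topspace_group)
    have "K \<inter> transporter G act {x0} S = {}"
      using x0 slicing_map_eq_inv_lcos[OF S(1)] by (auto simp: K_def Q_def transporter_def)
    then obtain V where V: "openin TX V" "x0 \<in> V" "K \<inter> transporter G act V S = {}"
      using transporter_disjoint_nbhd[OF S(2) \<open>compactin TG K\<close>] x0 by blast
    have "?f y \<in> W" if y: "y \<in> V \<inter> W0" for y
    proof -
      have yX: "y \<in> topspace TX" using y openin_subset[OF V(1)] by blast
      obtain t where t: "t \<in> carrier G" "act t y \<in> S"
        using slice yX by (rule global_sliceE)
      then have "t \<in> transporter G act N S" "t \<in> transporter G act V S"
        using y W0(3) by (auto simp: transporter_def)
      then have "t \<in> Q"
        using V(3) closure_of_subset[of "transporter G act N S" TG]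
        by (auto simp: K_def transporter_def)
      then show ?thesis
        using slicing_map_eq_inv_lcos[OF S(1) t(1) yX t(2)] by (simp add: Q_def)
    qed
    then show "\<exists>T. openin TX T \<and> x0 \<in> T \<and> T \<subseteq> {x \<in> topspace TX. ?f x \<in> W}"
      using V W0 openin_subset[OF V(1)] by (intro exI[of _ "V \<inter> W0"]) auto
  qed
  then show ?thesis
    using slicing_map_in_lcosets[OF slice]
    by (auto simp: continuous_map_def topspace_coset_topology)
qed

end

locale equivariant_coset_map = G_space_cosets +
  fixes f :: "'x \<Rightarrow> 'g set"
  assumes continuous: "continuous_map TX (coset_topology G TG H) f"
    and equivariant: "\<And>g x. \<lbrakk>g \<in> carrier G; x \<in> topspace TX\<rbrakk> \<Longrightarrow> f (act g x) = g <# f x"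
begin

abbreviation fibre :: "'x set" where
  "fibre \<equiv> {x \<in> topspace TX. f x = \<one> <# H}"

lemma value_lcos:
  assumes "x \<in> topspace TX"
  obtains g where "g \<in> carrier G" "f x = g <# H"
  using continuous_map_funspace[OF continuous] assms
  by (auto simp: topspace_coset_topology LCOSETS_def)

lemma act_fibre: "\<lbrakk>g \<in> carrier G; s \<in> fibre\<rbrakk> \<Longrightarrow> f (act g s) = g <# H"
  using H_subset by (simp add: equivariant lcos_m_assoc)

lemma act_inv_in_fibre:
  assumes "x \<in> topspace TX" "g \<in> carrier G" "f x = g <# H"
  shows "act (inv g) x \<in> fibre"
  using assms H_subset by (simp add: equivariant act_closed lcos_m_assoc)

lemma orbit_set_fibre: "orbit_set G act fibre = topspace TX"
proof (intro equalityI subsetI)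
  fix x assume "x \<in> orbit_set G act fibre"
  then show "x \<in> topspace TX"
    unfolding orbit_set_def using act_closed by blast
next
  fix x assume x: "x \<in> topspace TX"
  then obtain g where "g \<in> carrier G" "f x = g <# H"
    by (rule value_lcos)
  then show "x \<in> orbit_set G act fibre"
    unfolding orbit_set_def using act_inv_in_fibre[OF x] x by force
qed

lemma is_global_slice_fibre:
  assumes "closedin TG H"
  shows "is_global_slice G TX act H fibre"
proof -
  have "{act h s | h s. h \<in> H \<and> s \<in> fibre} = fibre"
  proof (intro equalityI subsetI)
    fix y assume "y \<in> {act h s | h s. h \<in> H \<and> s \<in> fibre}"
    then obtain h s where h: "h \<in> H" "h \<in> carrier G" and s: "s \<in> fibre" "y = act h s"
      using H_subset by blast
    then have "f y = \<one> <# H"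
      using act_fibre lcos_eq_one_iff by simp
    then show "y \<in> fibre"
      using h s act_closed by simp
  next
    fix y assume "y \<in> fibre"
    then show "y \<in> {act h s | h s. h \<in> H \<and> s \<in> fibre}"
      using subgroup.one_closed[OF subgroup] by force
  qed
  moreover have "closedin TX fibre"
    using closedin_continuous_map_preimage[OF continuous closedin_coset_topology_singleton_one[OF assms]]
    by simp
  moreover have "act g ` fibre \<inter> fibre = {}" if "g \<in> carrier G - H" for g
    using that act_fibre lcos_eq_one_iff by auto
  ultimately show ?thesis
    by (simp add: is_global_slice_def is_slice_def orbit_set_fibre)
qed

lemma slicing_map_fibre:
  assumes "closedin TG H" "x \<in> topspace TX"
  shows "slicing_map G act H fibre x = f x"
proof -
  obtain g where "g \<in> carrier G" "f x = g <# H"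
    using assms(2) by (rule value_lcos)
  then show ?thesis
    using slicing_map_eq_inv_lcos[OF _ inv_closed assms(2) act_inv_in_fibre[OF assms(2)]]
      is_global_slice_fibre[OF assms(1)]
    by (simp add: is_global_slice_def)
qed

lemma small_fibre:
  assumes "Hausdorff_space TG" "compactin TG H" "locally_compact_space TG"
  shows "small G TG TX act fibre"
  unfolding small_def
proof
  fix x0 assume x0: "x0 \<in> topspace TX"
  then obtain g0 where g0: "g0 \<in> carrier G" "f x0 = g0 <# H"
    by (rule value_lcos)
  then obtain U K where UK: "openin TG U" "compactin TG K" "g0 \<in> U" "U \<subseteq> K"
    using assms(3) by (force simp: locally_compact_space_def)
  define V where "V = {x \<in> topspace TX. f x \<in> (\<lambda>g. g <# H) ` U}"
  have "openin TX V"
    unfolding V_def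
    by (rule openin_continuous_map_preimage[OF continuous openin_coset_topology_image[OF UK(1)]])
  moreover have "x0 \<in> V"
    using x0 g0 UK(3) by (auto simp: V_def)
  moreover have "transporter G act V fibre \<subseteq> (\<lambda>(a, b). a \<otimes> inv b) ` (H \<times> K)"
  proof
    fix t assume "t \<in> transporter G act V fibre"
    then obtain y u where t: "t \<in> carrier G" "y \<in> topspace TX" "act t y \<in> fibre"
      and u: "u \<in> U" "f y = u <# H"
      by (auto simp: transporter_def V_def)
    have uG: "u \<in> carrier G"
      using u(1) openin_subset[OF UK(1)] by auto
    have "(t \<otimes> u) <# H = \<one> <# H"
      using t u uG H_subset by (simp add: equivariant lcos_m_assoc)
    then have "t \<otimes> u \<in> H"
      using lcos_eq_one_iff t uG by simp
    moreover have "t = (t \<otimes> u) \<otimes> inv u"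
      using t uG by (simp add: m_assoc)
    ultimately show "t \<in> (\<lambda>(a, b). a \<otimes> inv b) ` (H \<times> K)"
      using u(1) UK(4) by (auto intro!: image_eqI[of t _ "(t \<otimes> u, u)"])
  qed
  then have "thin G TG act V fibre"
    using thinI[OF assms(1) compactin_mult_inv[OF assms(2) UK(2)]] by blast
  ultimately show "\<exists>N. neighborhood TX x0 N \<and> thin G TG act N fibre"
    using openin_subset by (auto simp: neighborhood_def)
qed

end

theorem theorem2p2:
  fixes G :: "('g, 'b) monoid_scheme" and TG :: "'g topology"
    and TX :: "'x topology" and act :: "'g \<Rightarrow> 'x \<Rightarrow> 'x" and H :: "'g set"
  assumes "topological_group G TG"
    and "Hausdorff_space TG" and "completely_regular_space TG"
    and "locally_compact_space TG"
    and "Hausdorff_space TX" and "completely_regular_space TX"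
    and "subgroup H G" and "compactin TG H"
    and "proper_G_space G TG TX act"
  shows
    "(\<forall>S. is_global_slice G TX act H S \<and> small G TG TX act S \<longrightarrow>
          continuous_map TX (coset_topology G TG H) (slicing_map G act H S) \<and>
          open_map TX (coset_topology G TG H) (slicing_map G act H S) \<and>
          (compactin TX S \<longrightarrow> closed_map TX (coset_topology G TG H) (slicing_map G act H S)))
     \<and>
     (\<forall>f. continuous_map TX (coset_topology G TG H) f \<and>
          (\<forall>g \<in> carrier G. \<forall>x \<in> topspace TX. f (act g x) = coset_act G g (f x)) \<longrightarrow>
          (let S = {x \<in> topspace TX. f x = \<one>\<^bsub>G\<^esub> <#\<^bsub>G\<^esub> H} in
            is_global_slice G TX act H S \<and> small G TG TX act S \<and>
            (\<forall>x \<in> topspace TX. slicing_map G act H S x = f x)))"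
proof -
  interpret G_space_cosets G TG TX act H
    unfolding G_space_cosets_def G_space_cosets_axioms_def topological_G_space_def
    using assms(1,7,9) by (simp add: proper_G_space_def)
  have "closedin TG H"
    using compactin_imp_closedin assms(2,8) by blast
  show ?thesis
  proof (intro conjI allI impI)
    fix S assume "is_global_slice G TX act H S \<and> small G TG TX act S"
    then show "continuous_map TX (coset_topology G TG H) (slicing_map G act H S)"
      and "open_map TX (coset_topology G TG H) (slicing_map G act H S)"
      and "compactin TX S \<Longrightarrow> closed_map TX (coset_topology G TG H) (slicing_map G act H S)"
      using continuous_map_slicing_map open_map_slicing_map closed_map_slicing_map by blast+
  next
    fix f assume "continuous_map TX (coset_topology G TG H) f \<and>
      (\<forall>g \<in> carrier G. \<forall>x \<in> topspace TX. f (act g x) = coset_act G g (f x))"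
    then interpret equivariant_coset_map G TG TX act H f
      by unfold_locales auto
    show "let S = {x \<in> topspace TX. f x = \<one>\<^bsub>G\<^esub> <#\<^bsub>G\<^esub> H} in
        is_global_slice G TX act H S \<and> small G TG TX act S \<and>
        (\<forall>x \<in> topspace TX. slicing_map G act H S x = f x)"
      using is_global_slice_fibre small_fibre slicing_map_fibre \<open>closedin TG H\<close> assms(2,4,8)
      by (simp add: Let_def)
  qed
qed

end
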